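(* Let $a\in(0,1)$, $b>0$, and $p_0=a/(2b+1)$. Define for $t\in(0,1)$ \[ Q_{p_0}(t)=\frac{(1-t)^{-p_0}F(a,b;2b+1;t)}{F(a,b+1;2b+1;t)}. \] If $a-b>1/2$ then $Q_{p_0}$ is strictly decreasing on $(0,1)$; if $a-b<1/2$ then $Q_{p_0}$ is strictly increasing on $(0,1)$; if $a-b=1/2$ then $Q_{p_0}\equiv1$. Consequently, for all $t\in(0,1)$, \[ F(a,b;2b+1;t)<(1-t)^{p_0}F(a,b+1;2b+1;t)\ \text{ if } a-b>1/2, \] and the reverse strict inequality holds for all $t\in(0,1)$ if $a-b<1/2$.
   Context: For real $a,b,c$ with $c\notin\{0,-1,-2,\dots\}$, $F(a,b;c;x)=\sum_{n\ge0}\frac{(a)_n(b)_n}{(c)_n}\frac{x^n}{n!}$ for $x\in(-1,1)$, where $(a)_0=1$ and $(a)_n=a(a+1)\cdots(a+n-1)$. *)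

theory Defs
  imports "HOL-Analysis.Analysis"
begin

definition hyp2f1 :: "real \<Rightarrow> real \<Rightarrow> real \<Rightarrow> real \<Rightarrow> real" where
  "hyp2f1 a b c x = (\<Sum>n. pochhammer a n * pochhammer b n / pochhammer c n * x ^ n / fact n)"

definition Qp0 :: "real \<Rightarrow> real \<Rightarrow> real \<Rightarrow> real" where
  "Qp0 a b t = (1 - t) powr (- (a / (2*b+1))) * hyp2f1 a b (2*b+1) t / hyp2f1 a (b+1) (2*b+1) t"

end

theory Submission
  imports Defs "HOL-Real_Asymp.Real_Asymp"
begin

text \<open>Write \<open>F = F(a,b;2b+1;t)\<close> and \<open>p\<^sub>0 = a/(2b+1)\<close>. By the contiguous relation
\<open>F(a,b+1;2b+1;t) = F + t F'/b\<close>, and using the hypergeometric equation to eliminate \<open>F''\<close>, the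
derivative of \<open>Q\<^sub>p\<^sub>0\<close> is a positive multiple of
\<open>S = b(p\<^sub>0 - a) F\<^sup>2 + (2b + (p\<^sub>0 - a - b) t) F F' + t(1-t) F'\<^sup>2\<close>.
For \<open>V = t\<^bsup>2b+1\<^esup> (1-t)\<^bsup>p\<^sub>0+a-b-1\<^esup> S\<close> the equation gives again
\<open>V' = b(1 - 2p\<^sub>0) t\<^bsup>2b+1\<^esup> (1-t)\<^bsup>p\<^sub>0+a-b-2\<^esup> F ((1 - p\<^sub>0 t) F' - p\<^sub>0 b F)\<close>,
whose last factor is a power series with nonnegative coefficients. As \<open>V(0) = 0\<close>, both \<open>S\<close> and
\<open>Q'\<^sub>p\<^sub>0\<close> have the sign of \<open>1 - 2p\<^sub>0\<close>, i.e. of \<open>2b + 1 - 2a\<close>, on \<open>(0,1)\<close>; comparing with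
\<open>Q\<^sub>p\<^sub>0(0) = 1\<close> gives the inequalities.\<close>

lemma sgn_diff_eq_deriv_sgn:
  fixes f :: "real \<Rightarrow> real"
  assumes "x < y" "continuous_on {x..y} f"
    and "\<And>z. x < z \<Longrightarrow> z < y \<Longrightarrow> \<exists>D. (f has_real_derivative D) (at z) \<and> sgn D = s"
  shows "sgn (f y - f x) = s"
proof -
  have "\<exists>l z. x < z \<and> z < y \<and> (f has_real_derivative l) (at z) \<and> f y - f x = (y - x) * l"
    by (rule MVT[OF assms(1,2)]) (use assms(3) real_differentiable_def in blast)
  then obtain l z where z: "x < z" "z < y" and l: "(f has_real_derivative l) (at z)"
    and mvt: "f y - f x = (y - x) * l"
    by blast
  obtain D where "(f has_real_derivative D) (at z)" "sgn D = s"
    using assms(3)[OF z] by blast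
  with l have "sgn l = s"
    using DERIV_unique by blast
  then show ?thesis
    using assms(1) by (simp add: mvt sgn_mult)
qed

definition coeff_shift :: "(nat \<Rightarrow> real) \<Rightarrow> nat \<Rightarrow> real" where
  "coeff_shift g n = (case n of 0 \<Rightarrow> 0 | Suc m \<Rightarrow> g m)"

lemma coeff_shift_0 [simp]: "coeff_shift g 0 = 0"
  and coeff_shift_Suc [simp]: "coeff_shift g (Suc n) = g n"
  by (simp_all add: coeff_shift_def)

lemma coeff_shift_diffs: "coeff_shift (diffs g) = (\<lambda>n. of_nat n * g n)"
  by (simp add: fun_eq_iff coeff_shift_def diffs_def split: nat.split)

lemma sums_coeff_shift:
  assumes "(\<lambda>n. g n * x ^ n) sums s"
  shows "(\<lambda>n. coeff_shift g n * x ^ n) sums (x * s)"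
proof -
  have "(\<lambda>n. coeff_shift g (Suc n) * x ^ Suc n) sums (x * s)"
    using sums_mult[OF assms, of x] by (simp add: coeff_shift_def algebra_simps)
  then show ?thesis
    by (subst (asm) sums_Suc_iff) (simp add: coeff_shift_def)
qed

section \<open>Gaussian hypergeometric series\<close>

definition hg_coeff :: "real \<Rightarrow> real \<Rightarrow> real \<Rightarrow> nat \<Rightarrow> real" where
  "hg_coeff A B C n = pochhammer A n * pochhammer B n / pochhammer C n / fact n"

definition hyp2f1_deriv :: "real \<Rightarrow> real \<Rightarrow> real \<Rightarrow> real \<Rightarrow> real" where
  "hyp2f1_deriv A B C x = (\<Sum>n. diffs (hg_coeff A B C) n * x ^ n)"

definition hyp2f1_deriv2 :: "real \<Rightarrow> real \<Rightarrow> real \<Rightarrow> real \<Rightarrow> real" where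
  "hyp2f1_deriv2 A B C x = (\<Sum>n. diffs (diffs (hg_coeff A B C)) n * x ^ n)"

lemma hyp2f1_altdef: "hyp2f1 A B C = (\<lambda>x. \<Sum>n. hg_coeff A B C n * x ^ n)"
  unfolding hyp2f1_def hg_coeff_def by (simp add: fun_eq_iff field_simps)

lemma hg_coeff_0 [simp]: "hg_coeff A B C 0 = 1"
  by (simp add: hg_coeff_def)

lemma hyp2f1_at_0 [simp]: "hyp2f1 A B C 0 = 1"
  by (simp add: hyp2f1_altdef)

lemma hg_coeff_Suc:
  assumes "C > 0"
  shows "hg_coeff A B C (Suc n) * ((C + n) * (n + 1)) = hg_coeff A B C n * ((A + n) * (B + n))"
proof -
  have "pochhammer C n \<noteq> 0" "C + n \<noteq> 0"
    using assms by (simp_all add: pochhammer_eq_0_iff)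
  then show ?thesis
    unfolding hg_coeff_def pochhammer_Suc fact_Suc by (simp add: divide_simps)
qed

lemma hg_coeff_pos: "A > 0 \<Longrightarrow> B > 0 \<Longrightarrow> C > 0 \<Longrightarrow> hg_coeff A B C n > 0"
  by (simp add: hg_coeff_def pochhammer_pos)

lemma diffs_hg_coeff:
  assumes "C > 0"
  shows "diffs (hg_coeff A B C) n = hg_coeff A B C n * (A + n) * (B + n) / (C + n)"
  using hg_coeff_Suc[OF assms, of A B n] assms
  by (simp add: diffs_def field_simps add_pos_nonneg)

lemma summable_hg_series:
  assumes "C > 0" "\<bar>x\<bar> < 1"
  shows "summable (\<lambda>n. hg_coeff A B C n * x ^ n)"
proof -
  define ratio where "ratio n = \<bar>(A + n) * (B + n) / ((C + n) * (real n + 1))\<bar> * \<bar>x\<bar>" for n :: nat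
  define r where "r = (1 + \<bar>x\<bar>) / 2"
  have r: "r < 1" "\<bar>x\<bar> < r"
    using assms by (auto simp: r_def)
  have "(\<lambda>n. (A + real n) * (B + real n) / ((C + real n) * (real n + 1))) \<longlonglongrightarrow> 1"
    by real_asymp
  then have "ratio \<longlonglongrightarrow> \<bar>1\<bar> * \<bar>x\<bar>"
    unfolding ratio_def by (intro tendsto_intros)
  then obtain N where N: "\<And>n. n \<ge> N \<Longrightarrow> ratio n < r"
    using r order_tendstoD(2)[of ratio] by (force simp: eventually_sequentially)
  show ?thesis
  proof (rule summable_ratio_test[OF r(1), of N])
    fix n assume "n \<ge> N"
    have "(C + n) * (n + 1) > 0"
      using assms by simp
    then have "hg_coeff A B C (Suc n) = hg_coeff A B C n * ((A + n) * (B + n)) / ((C + n) * (n + 1))"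
      using hg_coeff_Suc[OF assms(1), of A B n] by (simp add: field_simps)
    then have "norm (hg_coeff A B C (Suc n) * x ^ Suc n) = ratio n * norm (hg_coeff A B C n * x ^ n)"
      by (simp add: ratio_def abs_mult power_abs abs_divide ac_simps)
    also have "\<dots> \<le> r * norm (hg_coeff A B C n * x ^ n)"
      using N[OF \<open>n \<ge> N\<close>] by (intro mult_right_mono) auto
    finally show "norm (hg_coeff A B C (Suc n) * x ^ Suc n) \<le> r * norm (hg_coeff A B C n * x ^ n)" .
  qed
qed

lemma summable_hg_deriv_series:
  "C > 0 \<Longrightarrow> \<bar>x\<bar> < 1 \<Longrightarrow> summable (\<lambda>n. diffs (hg_coeff A B C) n * x ^ n)"
  by (rule termdiff_converges[where K = 1]) (auto intro: summable_hg_series)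

lemma summable_hg_deriv2_series:
  "C > 0 \<Longrightarrow> \<bar>x\<bar> < 1 \<Longrightarrow> summable (\<lambda>n. diffs (diffs (hg_coeff A B C)) n * x ^ n)"
  by (rule termdiff_converges[where K = 1]) (auto intro: summable_hg_deriv_series)

lemma hyp2f1_has_real_derivative:
  "C > 0 \<Longrightarrow> \<bar>x\<bar> < 1 \<Longrightarrow> (hyp2f1 A B C has_real_derivative hyp2f1_deriv A B C x) (at x)"
  unfolding hyp2f1_altdef hyp2f1_deriv_def
  by (rule termdiffs_strong'[where K = 1]) (auto intro: summable_hg_series)

lemma hyp2f1_deriv_has_real_derivative:
  "C > 0 \<Longrightarrow> \<bar>x\<bar> < 1 \<Longrightarrow> (hyp2f1_deriv A B C has_real_derivative hyp2f1_deriv2 A B C x) (at x)"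
  unfolding hyp2f1_deriv_def[abs_def] hyp2f1_deriv2_def
  by (rule termdiffs_strong'[where K = 1]) (auto intro: summable_hg_deriv_series)

lemma continuous_on_hyp2f1:
  assumes "C > 0" "S \<subseteq> {-1<..<1}"
  shows "continuous_on S (hyp2f1 A B C)"
proof (intro continuous_at_imp_continuous_on ballI)
  fix x assume "x \<in> S"
  with assms have "\<bar>x\<bar> < 1"
    by (auto simp: abs_less_iff)
  then show "isCont (hyp2f1 A B C) x"
    by (rule DERIV_isCont[OF hyp2f1_has_real_derivative[OF assms(1)]])
qed

lemma continuous_on_hyp2f1_deriv:
  assumes "C > 0" "S \<subseteq> {-1<..<1}"
  shows "continuous_on S (hyp2f1_deriv A B C)"
proof (intro continuous_at_imp_continuous_on ballI)
  fix x assume "x \<in> S"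
  with assms have "\<bar>x\<bar> < 1"
    by (auto simp: abs_less_iff)
  then show "isCont (hyp2f1_deriv A B C) x"
    by (rule DERIV_isCont[OF hyp2f1_deriv_has_real_derivative[OF assms(1)]])
qed

lemma hyp2f1_pos:
  assumes "A > 0" "B > 0" "C > 0" "0 \<le> x" "x < 1"
  shows "hyp2f1 A B C x > 0"
  unfolding hyp2f1_altdef
proof (rule suminf_pos2[where i = 0])
  show "summable (\<lambda>n. hg_coeff A B C n * x ^ n)"
    using assms by (intro summable_hg_series) auto
  show "0 \<le> hg_coeff A B C n * x ^ n" for n
    using assms hg_coeff_pos[OF assms(1-3), of n] by simp
qed simp

lemma hg_coeff_ode:
  fixes A B C :: real
  assumes "C > 0"
  defines "f \<equiv> hg_coeff A B C"
  shows "coeff_shift (diffs (diffs f)) n - coeff_shift (coeff_shift (diffs (diffs f))) n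
    + C * diffs f n - (A + B + 1) * coeff_shift (diffs f) n - A * B * f n = 0"
proof (cases n)
  case (Suc m)
  have "f (m + 2) * ((C + real m + 1) * (real m + 2)) = f (m + 1) * ((A + real m + 1) * (B + real m + 1))"
    using hg_coeff_Suc[OF assms(1), of A B "Suc m"] by (simp add: f_def algebra_simps)
  then show ?thesis
    unfolding coeff_shift_diffs by (simp add: Suc diffs_def algebra_simps)
qed (use hg_coeff_Suc[OF assms(1), of A B 0] in \<open>simp add: coeff_shift_diffs diffs_def f_def mult.commute\<close>)

lemma hyp2f1_ode:
  assumes "C > 0" "\<bar>x\<bar> < 1"
  shows "x * (1 - x) * hyp2f1_deriv2 A B C x + (C - (A + B + 1) * x) * hyp2f1_deriv A B C x
    - A * B * hyp2f1 A B C x = 0"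
proof -
  define f where "f = hg_coeff A B C"
  define F where "F = hyp2f1 A B C x"
  define F' where "F' = hyp2f1_deriv A B C x"
  define F'' where "F'' = hyp2f1_deriv2 A B C x"
  have F: "(\<lambda>n. f n * x ^ n) sums F"
    using summable_hg_series[OF assms] by (simp add: F_def f_def hyp2f1_altdef summable_sums)
  have F': "(\<lambda>n. diffs f n * x ^ n) sums F'"
    using summable_hg_deriv_series[OF assms] by (simp add: F'_def f_def hyp2f1_deriv_def summable_sums)
  have F'': "(\<lambda>n. diffs (diffs f) n * x ^ n) sums F''"
    using summable_hg_deriv2_series[OF assms] by (simp add: F''_def f_def hyp2f1_deriv2_def summable_sums)
  have "(\<lambda>n. coeff_shift (diffs (diffs f)) n * x ^ n - coeff_shift (coeff_shift (diffs (diffs f))) n * x ^ n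
      + C * (diffs f n * x ^ n) - (A + B + 1) * (coeff_shift (diffs f) n * x ^ n) - A * B * (f n * x ^ n))
    sums (x * F'' - x * (x * F'') + C * F' - (A + B + 1) * (x * F') - A * B * F)"
    by (intro sums_diff sums_add sums_mult sums_coeff_shift F F' F'')
  then have "(\<lambda>n. (coeff_shift (diffs (diffs f)) n - coeff_shift (coeff_shift (diffs (diffs f))) n
      + C * diffs f n - (A + B + 1) * coeff_shift (diffs f) n - A * B * f n) * x ^ n)
    sums (x * F'' - x * (x * F'') + C * F' - (A + B + 1) * (x * F') - A * B * F)"
    by (simp add: algebra_simps)
  then have "(\<lambda>n. 0) sums (x * F'' - x * (x * F'') + C * F' - (A + B + 1) * (x * F') - A * B * F)"
    unfolding f_def hg_coeff_ode[OF assms(1)] by simp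
  then show ?thesis
    using sums_unique2[OF _ sums_zero] by (force simp: F_def F'_def F''_def algebra_simps)
qed

lemma hg_coeff_succ_right:
  assumes "B \<noteq> 0"
  shows "hg_coeff A (B + 1) C n = hg_coeff A B C n * (B + n) / B"
proof -
  have "pochhammer (B + 1) n * B = pochhammer B n * (B + n)"
    using pochhammer_rec[of B n] pochhammer_Suc[of B n] by (simp add: mult.commute)
  then have "pochhammer (B + 1) n = pochhammer B n * (B + n) / B"
    using assms by (simp add: field_simps)
  then show ?thesis
    by (simp add: hg_coeff_def ac_simps)
qed

lemma hyp2f1_contiguous:
  assumes "C > 0" "B \<noteq> 0" "\<bar>x\<bar> < 1"
  shows "hyp2f1 A (B + 1) C x = hyp2f1 A B C x + x * hyp2f1_deriv A B C x / B"
proof -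
  define f where "f = hg_coeff A B C"
  have "(\<lambda>n. f n * x ^ n + inverse B * (coeff_shift (diffs f) n * x ^ n))
      sums (hyp2f1 A B C x + inverse B * (x * hyp2f1_deriv A B C x))"
    using summable_hg_series[OF assms(1,3)] summable_hg_deriv_series[OF assms(1,3)]
    by (intro sums_add sums_mult sums_coeff_shift)
       (simp_all add: f_def hyp2f1_altdef hyp2f1_deriv_def summable_sums)
  moreover have "f n * x ^ n + inverse B * (coeff_shift (diffs f) n * x ^ n) = hg_coeff A (B + 1) C n * x ^ n" for n
    using assms(2) by (simp add: f_def coeff_shift_diffs hg_coeff_succ_right field_simps)
  ultimately show ?thesis
    by (simp add: hyp2f1_altdef sums_iff field_simps)
qed

lemma hyp2f1_succ_right_has_real_derivative:
  assumes "C > 0" "B \<noteq> 0" "\<bar>x\<bar> < 1"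
  shows "(hyp2f1 A (B + 1) C has_real_derivative
    hyp2f1_deriv A B C x + (hyp2f1_deriv A B C x + x * hyp2f1_deriv2 A B C x) / B) (at x)"
proof -
  have "eventually (\<lambda>t. t \<in> {-1<..<1}) (nhds x)"
    using assms(3) by (intro eventually_nhds_in_open) auto
  then have "eventually (\<lambda>t. hyp2f1 A B C t + t * hyp2f1_deriv A B C t / B = hyp2f1 A (B + 1) C t) (nhds x)"
    by (rule eventually_mono) (use assms in \<open>auto simp: hyp2f1_contiguous abs_less_iff\<close>)
  moreover have "((\<lambda>t. hyp2f1 A B C t + t * hyp2f1_deriv A B C t / B) has_real_derivative
      hyp2f1_deriv A B C x + (hyp2f1_deriv A B C x + x * hyp2f1_deriv2 A B C x) / B) (at x)"
    using assms by (auto intro!: derivative_eq_intros hyp2f1_has_real_derivative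
      hyp2f1_deriv_has_real_derivative simp: field_simps)
  ultimately show ?thesis
    by (simp add: DERIV_cong_ev)
qed

lemma hyp2f1_deriv_lower_bound:
  assumes "A > 0" "B > 0" "C > A" "0 < x" "x < 1"
  shows "A * B / C * hyp2f1 A B C x < (1 - A * x / C) * hyp2f1_deriv A B C x"
proof -
  have C: "C > 0" and x: "\<bar>x\<bar> < 1"
    using assms by simp_all
  define f where "f = hg_coeff A B C"
  define g where "g n = diffs f n * x ^ n - A / C * (coeff_shift (diffs f) n * x ^ n) - A * B / C * (f n * x ^ n)" for n
  have sums: "g sums (hyp2f1_deriv A B C x - A / C * (x * hyp2f1_deriv A B C x) - A * B / C * hyp2f1 A B C x)"
    unfolding g_def using summable_hg_series[OF C x] summable_hg_deriv_series[OF C x]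
    by (intro sums_diff sums_mult sums_coeff_shift)
       (simp_all add: f_def hyp2f1_altdef hyp2f1_deriv_def summable_sums)
  have g: "g n = f n * (B + n) * n * (C - A) / (C * (C + n)) * x ^ n" for n
  proof -
    have "C + n > 0"
      using C by simp
    then show ?thesis
      unfolding g_def coeff_shift_diffs f_def diffs_hg_coeff[OF C] using C
      by (simp add: divide_simps) (simp add: algebra_simps)
  qed
  have "0 < suminf g"
  proof (rule suminf_pos2[where i = 1])
    show "summable g"
      using sums by (rule sums_summable)
    show "0 \<le> g n" for n
      unfolding g f_def using assms hg_coeff_pos[OF assms(1,2) C, of n] by simp
    show "0 < g 1"
      unfolding g f_def using assms hg_coeff_pos[OF assms(1,2) C, of 1] by simp
  qed
  then show ?thesis
    using sums by (simp add: sums_iff algebra_simps)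
qed

section \<open>Monotonicity of \<open>Qp0\<close>\<close>

definition Qp0_numer :: "real \<Rightarrow> real \<Rightarrow> real \<Rightarrow> real" where
  "Qp0_numer a b x = b * (a / (2*b+1) - a) * (hyp2f1 a b (2*b+1) x)\<^sup>2
     + (2*b + (a / (2*b+1) - a - b) * x) * hyp2f1 a b (2*b+1) x * hyp2f1_deriv a b (2*b+1) x
     + x * (1 - x) * (hyp2f1_deriv a b (2*b+1) x)\<^sup>2"

lemma Qp0_has_real_derivative:
  assumes "0 < a" "0 < b" "0 \<le> y" "y < 1"
  shows "(Qp0 a b has_real_derivative (1 - y) powr (- (a / (2*b+1))) * Qp0_numer a b y
    / ((1 - y) * b * (hyp2f1 a (b+1) (2*b+1) y)\<^sup>2)) (at y)"
proof -
  define c where "c = 2*b+1"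
  define p0 where "p0 = a / c"
  define F where "F = hyp2f1 a b c y"
  define u where "u = hyp2f1_deriv a b c y"
  define w where "w = hyp2f1_deriv2 a b c y"
  define G where "G = hyp2f1 a (b+1) c y"
  define Y where "Y = (1 - y) powr (- p0)"
  have c: "c > 0" and y: "\<bar>y\<bar> < 1"
    using assms by (simp_all add: c_def)
  have G_pos: "G > 0"
    using assms c by (simp add: G_def hyp2f1_pos)
  have dF: "(hyp2f1 a b c has_real_derivative u) (at y)"
    unfolding u_def using c y by (rule hyp2f1_has_real_derivative)
  have dG: "(hyp2f1 a (b+1) c has_real_derivative u + (u + y * w) / b) (at y)"
    unfolding u_def w_def using c _ y by (rule hyp2f1_succ_right_has_real_derivative) (use assms in simp)
  have dY: "((\<lambda>t. (1 - t) powr (- p0)) has_real_derivative p0 * Y / (1 - y)) (at y)"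
    using assms by (auto intro!: derivative_eq_intros simp: Y_def powr_diff)
  have "Qp0 a b = (\<lambda>t. (1 - t) powr (- p0) * hyp2f1 a b c t / hyp2f1 a (b+1) c t)"
    by (simp add: fun_eq_iff Qp0_def p0_def c_def)
  then have dQ: "(Qp0 a b has_real_derivative
      ((p0 * Y / (1 - y) * F + u * Y) * G - Y * F * (u + (u + y * w) / b)) / (G * G)) (at y)"
    using DERIV_divide[OF DERIV_mult[OF dY dF] dG] G_pos by (simp add: F_def G_def Y_def)
  have ode: "y * (1 - y) * w + (c - (a + b + 1) * y) * u - a * b * F = 0"
    using hyp2f1_ode[OF c y] by (simp add: F_def u_def w_def)
  have G: "G = F + y * u / b"
    using hyp2f1_contiguous[OF c _ y] assms by (simp add: F_def u_def G_def)
  have a: "a = p0 * c"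
    using c by (simp add: p0_def)
  have "b * (p0 * F * G + (1 - y) * (u * G - F * (u + (u + y * w) / b))) - Qp0_numer a b y
      = - F * (y * (1 - y) * w + (c - (a + b + 1) * y) * u - a * b * F)"
    using assms unfolding G Qp0_numer_def c_def[symmetric] p0_def[symmetric] F_def[symmetric] u_def[symmetric]
    by (simp add: a c_def field_simps power2_eq_square)
  with ode have numer: "b * (p0 * F * G + (1 - y) * (u * G - F * (u + (u + y * w) / b))) = Qp0_numer a b y"
    by simp
  have "((p0 * Y / (1 - y) * F + u * Y) * G - Y * F * (u + (u + y * w) / b)) / (G * G)
      = Y * (b * (p0 * F * G + (1 - y) * (u * G - F * (u + (u + y * w) / b)))) / ((1 - y) * b * G\<^sup>2)"
    using assms G_pos by (simp add: field_simps power2_eq_square)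
  also have "\<dots> = Y * Qp0_numer a b y / ((1 - y) * b * G\<^sup>2)"
    unfolding numer ..
  finally show ?thesis
    using dQ unfolding Y_def G_def p0_def c_def by simp
qed

lemma Qp0_numer_has_real_derivative:
  fixes a b x :: real
  assumes "0 < b" "\<bar>x\<bar> < 1"
  defines "p0 \<equiv> a / (2*b+1)" and "F \<equiv> hyp2f1 a b (2*b+1) x"
    and "u \<equiv> hyp2f1_deriv a b (2*b+1) x" and "w \<equiv> hyp2f1_deriv2 a b (2*b+1) x"
  shows "(Qp0_numer a b has_real_derivative 2 * b * (p0 - a) * F * u + (p0 - a - b) * F * u
    + (2*b + (p0 - a - b) * x) * (u\<^sup>2 + F * w) + (1 - 2*x) * u\<^sup>2 + 2 * x * (1 - x) * u * w) (at x)"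
proof -
  define c where "c = 2*b+1"
  have c: "c > 0"
    using assms by (simp add: c_def)
  have "Qp0_numer a b = (\<lambda>t. b * (p0 - a) * (hyp2f1 a b c t)\<^sup>2
     + (2*b + (p0 - a - b) * t) * hyp2f1 a b c t * hyp2f1_deriv a b c t + t * (1 - t) * (hyp2f1_deriv a b c t)\<^sup>2)"
    by (simp add: fun_eq_iff Qp0_numer_def p0_def c_def)
  then show ?thesis
    unfolding F_def u_def w_def c_def[symmetric]
    by (auto intro!: derivative_eq_intros hyp2f1_has_real_derivative[OF c assms(2)]
        hyp2f1_deriv_has_real_derivative[OF c assms(2)] simp: algebra_simps power2_eq_square)
qed

lemma weighted_Qp0_numer_has_real_derivative:
  fixes a b x :: real
  assumes "0 < b" "0 < x" "x < 1"
  defines "p0 \<equiv> a / (2*b+1)"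
  shows "((\<lambda>t. t powr (2*b+1) * (1 - t) powr (p0 + a - b - 1) * Qp0_numer a b t) has_real_derivative
      b * (1 - 2*p0) * x powr (2*b+1) * (1 - x) powr (p0 + a - b - 2) * hyp2f1 a b (2*b+1) x
      * ((1 - p0 * x) * hyp2f1_deriv a b (2*b+1) x - p0 * b * hyp2f1 a b (2*b+1) x)) (at x)"
proof -
  define c where "c = 2*b+1"
  define e where "e = p0 + a - b - 1"
  define F where "F = hyp2f1 a b c x"
  define u where "u = hyp2f1_deriv a b c x"
  define w where "w = hyp2f1_deriv2 a b c x"
  define S' where "S' = 2 * b * (p0 - a) * F * u + (p0 - a - b) * F * u
    + (2*b + (p0 - a - b) * x) * (u\<^sup>2 + F * w) + (1 - 2*x) * u\<^sup>2 + 2 * x * (1 - x) * u * w"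
  have c: "c > 0" and x: "\<bar>x\<bar> < 1"
    using assms by (simp_all add: c_def)
  have "(Qp0_numer a b has_real_derivative S') (at x)"
    unfolding S'_def F_def u_def w_def p0_def c_def using assms(1) x by (rule Qp0_numer_has_real_derivative)
  then have dV: "((\<lambda>t. t powr c * (1 - t) powr e * Qp0_numer a b t) has_real_derivative
      x powr c * (1 - x) powr e * ((c * (1 - x) - e * x) * Qp0_numer a b x + x * (1 - x) * S') / (x * (1 - x))) (at x)"
    using assms by (auto intro!: derivative_eq_intros simp: powr_diff field_simps)
  have ode: "x * (1 - x) * w + (c - (a + b + 1) * x) * u - a * b * F = 0"
    using hyp2f1_ode[OF c x] by (simp add: F_def u_def w_def)
  have S: "Qp0_numer a b x = b * (p0 - a) * F\<^sup>2 + (2*b + (p0 - a - b) * x) * F * u + x * (1 - x) * u\<^sup>2"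
    by (simp add: Qp0_numer_def F_def u_def p0_def c_def)
  have a: "a = p0 * c"
    using c by (simp add: p0_def c_def)
  have "(c * (1 - x) - e * x) * Qp0_numer a b x + x * (1 - x) * S'
      - b * (1 - 2*p0) * x * F * ((1 - p0 * x) * u - p0 * b * F)
      = ((2*b + (p0 - a - b) * x) * F + 2 * x * (1 - x) * u)
        * (x * (1 - x) * w + (c - (a + b + 1) * x) * u - a * b * F)"
    unfolding S by (simp add: S'_def e_def a c_def algebra_simps power2_eq_square)
  with ode have key: "(c * (1 - x) - e * x) * Qp0_numer a b x + x * (1 - x) * S'
      = b * (1 - 2*p0) * x * F * ((1 - p0 * x) * u - p0 * b * F)"
    by simp
  have pow: "(1 - x) powr (p0 + a - b - 2) = (1 - x) powr e / (1 - x)"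
    using assms(2,3) by (simp add: e_def powr_diff power2_eq_square flip: diff_diff_eq)
  have "x powr c * (1 - x) powr e * ((c * (1 - x) - e * x) * Qp0_numer a b x + x * (1 - x) * S') / (x * (1 - x))
      = b * (1 - 2*p0) * x powr c * (1 - x) powr (p0 + a - b - 2) * F * ((1 - p0 * x) * u - p0 * b * F)"
    unfolding key pow using assms(2,3) by (simp add: field_simps)
  with dV show ?thesis
    unfolding c_def e_def F_def u_def by simp
qed

lemma sgn_Qp0_numer:
  assumes "0 < a" "a < 1" "0 < b" "0 < x" "x < 1"
  shows "sgn (Qp0_numer a b x) = sgn (2*b + 1 - 2*a)"
proof -
  define p0 where "p0 = a / (2*b+1)"
  define V where "V t = t powr (2*b+1) * (1 - t) powr (p0 + a - b - 1) * Qp0_numer a b t" for t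
  have "1 - 2*p0 = (2*b + 1 - 2*a) / (2*b + 1)"
    using assms by (simp add: p0_def field_simps)
  then have sgn_p0: "sgn (1 - 2*p0) = sgn (2*b + 1 - 2*a)"
    using assms by simp
  have "continuous_on {0..x} (Qp0_numer a b)"
    unfolding Qp0_numer_def[abs_def] using assms
    by (intro continuous_intros continuous_on_hyp2f1 continuous_on_hyp2f1_deriv) auto
  then have "continuous_on {0..x} V"
    unfolding V_def using assms
    by (intro continuous_intros continuous_on_powr') (auto intro: continuous_intros)
  moreover have "\<exists>D. (V has_real_derivative D) (at t) \<and> sgn D = sgn (2*b + 1 - 2*a)"
    if "0 < t" "t < x" for t
  proof (intro exI conjI)
    have t: "0 < t" "t < 1"
      using that assms by simp_all
    show "(V has_real_derivative b * (1 - 2*p0) * t powr (2*b+1) * (1 - t) powr (p0 + a - b - 2)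
        * hyp2f1 a b (2*b+1) t * ((1 - p0 * t) * hyp2f1_deriv a b (2*b+1) t - p0 * b * hyp2f1 a b (2*b+1) t)) (at t)"
      unfolding V_def[abs_def] p0_def using assms(3) t by (rule weighted_Qp0_numer_has_real_derivative)
    have "hyp2f1 a b (2*b+1) t > 0"
      using assms t by (intro hyp2f1_pos) auto
    moreover have "(1 - p0 * t) * hyp2f1_deriv a b (2*b+1) t - p0 * b * hyp2f1 a b (2*b+1) t > 0"
      using hyp2f1_deriv_lower_bound[of a b "2*b+1" t] assms t by (simp add: p0_def)
    ultimately show "sgn (b * (1 - 2*p0) * t powr (2*b+1) * (1 - t) powr (p0 + a - b - 2)
        * hyp2f1 a b (2*b+1) t * ((1 - p0 * t) * hyp2f1_deriv a b (2*b+1) t - p0 * b * hyp2f1 a b (2*b+1) t))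
      = sgn (2*b + 1 - 2*a)"
      using assms t by (simp add: sgn_mult sgn_p0)
  qed
  ultimately have "sgn (V x - V 0) = sgn (2*b + 1 - 2*a)"
    by (rule sgn_diff_eq_deriv_sgn[OF assms(4)])
  then show ?thesis
    using assms by (simp add: V_def sgn_mult)
qed

lemma sgn_Qp0_diff:
  assumes "0 < a" "a < 1" "0 < b" "0 \<le> r" "r < t" "t < 1"
  shows "sgn (Qp0 a b t - Qp0 a b r) = sgn (2*b + 1 - 2*a)"
proof (rule sgn_diff_eq_deriv_sgn[OF \<open>r < t\<close>])
  show "continuous_on {r..t} (Qp0 a b)"
  proof (intro continuous_at_imp_continuous_on ballI)
    fix y assume "y \<in> {r..t}"
    with assms show "isCont (Qp0 a b) y"
      by (intro DERIV_isCont[OF Qp0_has_real_derivative]) auto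
  qed
  fix y assume y: "r < y" "y < t"
  show "\<exists>D. (Qp0 a b has_real_derivative D) (at y) \<and> sgn D = sgn (2*b + 1 - 2*a)"
  proof (intro exI conjI)
    show "(Qp0 a b has_real_derivative (1 - y) powr (- (a / (2*b+1))) * Qp0_numer a b y
        / ((1 - y) * b * (hyp2f1 a (b+1) (2*b+1) y)\<^sup>2)) (at y)"
      using assms y by (intro Qp0_has_real_derivative) auto
    have "hyp2f1 a (b+1) (2*b+1) y > 0"
      using assms y by (intro hyp2f1_pos) auto
    then show "sgn ((1 - y) powr (- (a / (2*b+1))) * Qp0_numer a b y
        / ((1 - y) * b * (hyp2f1 a (b+1) (2*b+1) y)\<^sup>2)) = sgn (2*b + 1 - 2*a)"
      using assms y sgn_Qp0_numer[of a b y] by (simp add: sgn_mult)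
  qed
qed

lemma Qp0_at_0 [simp]: "Qp0 a b 0 = 1"
  by (simp add: Qp0_def)

lemma sgn_hyp2f1_contiguous_gap:
  assumes "0 < a" "a < 1" "0 < b" "0 < t" "t < 1"
  shows "sgn (hyp2f1 a b (2*b+1) t - (1 - t) powr (a / (2*b+1)) * hyp2f1 a (b+1) (2*b+1) t)
    = sgn (2*b + 1 - 2*a)"
proof -
  have G: "hyp2f1 a (b+1) (2*b+1) t > 0"
    using assms by (simp add: hyp2f1_pos)
  have "Qp0 a b t - Qp0 a b 0
      = (hyp2f1 a b (2*b+1) t - (1 - t) powr (a / (2*b+1)) * hyp2f1 a (b+1) (2*b+1) t)
        / ((1 - t) powr (a / (2*b+1)) * hyp2f1 a (b+1) (2*b+1) t)"
    using G assms unfolding Qp0_def powr_minus by (simp add: divide_simps)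
  then show ?thesis
    using sgn_Qp0_diff[of a b 0 t] assms G by (simp add: sgn_mult)
qed

theorem lemma3:
  fixes a b :: real
  assumes "0 < a" "a < 1" "0 < b"
  defines "p0 \<equiv> a / (2*b+1)"
  shows "(a - b > 1/2 \<longrightarrow> strict_antimono_on {0<..<1} (Qp0 a b))
    \<and> (a - b < 1/2 \<longrightarrow> strict_mono_on {0<..<1} (Qp0 a b))
    \<and> (a - b = 1/2 \<longrightarrow> (\<forall>t\<in>{0<..<1}. Qp0 a b t = 1))
    \<and> (a - b > 1/2 \<longrightarrow> (\<forall>t\<in>{0<..<1}.
          hyp2f1 a b (2*b+1) t < (1 - t) powr p0 * hyp2f1 a (b+1) (2*b+1) t))
    \<and> (a - b < 1/2 \<longrightarrow> (\<forall>t\<in>{0<..<1}.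
          hyp2f1 a b (2*b+1) t > (1 - t) powr p0 * hyp2f1 a (b+1) (2*b+1) t))"
proof -
  define s where "s = sgn (2*b + 1 - 2*a)"
  have s: "a - b > 1/2 \<longleftrightarrow> s = -1" "a - b < 1/2 \<longleftrightarrow> s = 1" "a - b = 1/2 \<longleftrightarrow> s = 0"
    by (auto simp: s_def sgn_if)
  have mono: "sgn (Qp0 a b t - Qp0 a b r) = s" if "0 \<le> r" "r < t" "t < 1" for r t
    using sgn_Qp0_diff[OF assms(1-3) that] by (simp add: s_def)
  have gap: "sgn (hyp2f1 a b (2*b+1) t - (1 - t) powr p0 * hyp2f1 a (b+1) (2*b+1) t) = s"
    if "0 < t" "t < 1" for t
    using sgn_hyp2f1_contiguous_gap[OF assms(1-3) that] by (simp add: s_def p0_def)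
  have "a - b > 1/2 \<Longrightarrow> strict_antimono_on {0<..<1} (Qp0 a b)"
    using mono s(1) by (auto simp: monotone_on_def sgn_1_neg)
  moreover have "a - b < 1/2 \<Longrightarrow> strict_mono_on {0<..<1} (Qp0 a b)"
    using mono s(2) by (auto simp: monotone_on_def sgn_1_pos)
  moreover have "Qp0 a b t = 1" if "a - b = 1/2" "0 < t" "t < 1" for t
    using mono[of 0 t] s(3) that by (simp add: sgn_0_0)
  ultimately show ?thesis
    using gap s(1,2) by (auto simp: sgn_1_pos sgn_1_neg)
qed

end
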